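(* Let $\mathbf a=(a_1,\dots,a_m)$ be an irreducible sequence, and for a nonnegative integer $x$ let $\mathbf m'(\mathbf a,x)$ be the $m\times m$ matrix whose $(i,j)$-entry is $$\frac{(q^{2x+2i};q^2)_{a_j+1-2i}}{(q^{2x+2i};q)_{a_j+1-2i}\,(q;q)_{a_j+1-2i}}$$ if $a_j+1-2i\ge 0$, and $0$ otherwise. Then there exists a lower triangular $m\times m$ matrix $\mathbf f(\mathbf a)$ with entries in the field $\mathbb C(q)$ of rational functions, all diagonal entries equal to $1$, and whose entries do not depend on $x$, such that for every nonnegative integer $x$ the product $\mathbf m'(\mathbf a,x)\cdot \mathbf f(\mathbf a)$ is upper triangular and its diagonal entries are elements of $\mathbb C(q)$ that do not depend on $x$.
   Context: $q$ is an indeterminate. For integers $n\ge 0$, $(a;q)_n=\prod_{j=0}^{n-1}(1-aq^j)$ (so $(a;q)_0=1$). A finite sequence of integers $\mathbf a=(a_1,\dots,a_m)$ is called admissible if it is strictly increasing and $2i-1\le a_i\le 2m$ for all $1\le i\le m$. An admissible sequence is called irreducible if moreover $2i+1\le a_i\le 2m$ for all $1\le i<m$ and $a_m=2m$. *)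

theory Defs
  imports Complex_Main "HOL-Computational_Algebra.Polynomial" "HOL-Computational_Algebra.Fraction_Field"
begin

type_synonym ratfun = "complex poly fract"

definition qvar :: ratfun where
  "qvar = Fract [:0, 1:] 1"

definition qpoch :: "ratfun \<Rightarrow> ratfun \<Rightarrow> nat \<Rightarrow> ratfun" where
  "qpoch a b n = (\<Prod>j<n. 1 - a * b ^ j)"

text \<open>Sequences a = (a_1,...,a_m) are lists of integers; a_i = a ! (i-1).\<close>
definition admissible :: "int list \<Rightarrow> bool" where
  "admissible a \<longleftrightarrow> sorted_wrt (<) a \<and>
     (\<forall>i\<in>{1..length a}. 2 * int i - 1 \<le> a ! (i - 1) \<and> a ! (i - 1) \<le> 2 * int (length a))"

definition irreducible_seq :: "int list \<Rightarrow> bool" where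
  "irreducible_seq a \<longleftrightarrow> admissible a \<and> a \<noteq> [] \<and>
     (\<forall>i\<in>{1..<length a}. 2 * int i + 1 \<le> a ! (i - 1) \<and> a ! (i - 1) \<le> 2 * int (length a)) \<and>
     a ! (length a - 1) = 2 * int (length a)"

text \<open>The matrix m'(a,x), indices i,j in {1..m}.\<close>
definition mprime :: "int list \<Rightarrow> nat \<Rightarrow> nat \<Rightarrow> nat \<Rightarrow> ratfun" where
  "mprime a x i j =
     (let k = a ! (j - 1) + 1 - 2 * int i in
      if k \<ge> 0 then
        qpoch (qvar ^ (2 * x + 2 * i)) (qvar ^ 2) (nat k) /
          (qpoch (qvar ^ (2 * x + 2 * i)) qvar (nat k) * qpoch qvar qvar (nat k))
      else 0)"

definition matmul :: "nat \<Rightarrow> (nat \<Rightarrow> nat \<Rightarrow> ratfun) \<Rightarrow> (nat \<Rightarrow> nat \<Rightarrow> ratfun) \<Rightarrow> nat \<Rightarrow> nat \<Rightarrow> ratfun" where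
  "matmul m A B i j = (\<Sum>k=1..m. A i k * B k j)"

end

theory Submission
  imports Defs Jordan_Normal_Form.Determinant
begin

text \<open>
  Put \<open>\<phi>(N, e) = (q\<^sup>e;q\<^sup>2)\<^sub>N / ((q\<^sup>e;q)\<^sub>N (q;q)\<^sub>N)\<close>, so that the \<open>(i, k)\<close>-entry of \<open>m'(a, x)\<close> is
  \<open>\<phi>(a\<^sub>k + 1 - 2i, 2x + 2i)\<close>. Both sides of the expansion
  \<open>\<phi>(N, e) = \<Sum>\<^sub>r c\<^sub>r(e) / (q;q)\<^sub>N\<^sub>-\<^sub>2\<^sub>r\<close> with explicit coefficients \<open>c\<^sub>r(e)\<close>, \<open>c\<^sub>0 = 1\<close>, satisfy the
  same recursion in \<open>N\<close> and \<open>e\<close>. Hence \<open>m'(a, x) = U(x) P\<close>, where \<open>U(x)\<close> with entries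
  \<open>c\<^sub>n\<^sub>-\<^sub>i(2x + 2i)\<close> is upper unitriangular and \<open>P\<^sub>n\<^sub>k = 1 / (q;q)\<^sub>a\<^sub>k\<^sub>+\<^sub>1\<^sub>-\<^sub>2\<^sub>n\<close> does not depend
  on \<open>x\<close>. It therefore suffices to find a lower unitriangular \<open>f\<close> with \<open>P f\<close> upper
  triangular; its \<open>j\<close>-th column solves a linear system whose matrix is the trailing block
  \<open>(P\<^sub>n\<^sub>k)\<^sub>n\<^sub>,\<^sub>k\<^sub>>\<^sub>j\<close>. After clearing denominators the block consists of polynomials whose
  degrees, by the rearrangement inequality and since \<open>a\<close> is strictly increasing, make the
  identity the unique permutation of maximal degree in the Leibniz expansion of its
  determinant. So the block is invertible.
\<close>

interpretation to_fract_hom: comm_ring_hom "to_fract :: 'a :: idom \<Rightarrow> 'a fract"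
  by unfold_locales auto

lemma to_fract_monom_1: "to_fract (monom (1::complex) k) = qvar ^ k"
proof -
  have "qvar = to_fract [:0, 1:]"
    by (simp add: qvar_def to_fract_def)
  then show ?thesis
    by (simp add: monom_altdef to_fract_hom.hom_power)
qed

lemma qvar_power_neq_1:
  assumes "k > 0"
  shows "qvar ^ k \<noteq> 1"
proof
  assume "qvar ^ k = 1"
  then have "to_fract (monom (1::complex) k) = to_fract 1"
    by (simp add: to_fract_monom_1)
  then have "monom (1::complex) k = 1"
    by (simp only: to_fract_eq_iff)
  with assms show False
    by (simp add: monom_eq_1_iff)
qed

lemma one_minus_qvar_power_neq_0: "k > 0 \<Longrightarrow> 1 - qvar ^ k \<noteq> 0"
  using qvar_power_neq_1 by simp

lemma qpoch_0 [simp]: "qpoch a b 0 = 1"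
  by (simp add: qpoch_def)

lemma qpoch_Suc: "qpoch a b (Suc n) = qpoch a b n * (1 - a * b ^ n)"
  by (simp add: qpoch_def)

lemma qpoch_Suc_shift: "qpoch a b (Suc n) = (1 - a) * qpoch (a * b) b n"
  unfolding qpoch_def by (subst prod.lessThan_Suc_shift) (simp add: mult.assoc)

lemma qpoch_qvar_power_neq_0:
  assumes "e > 0"
  shows "qpoch (qvar ^ e) (qvar ^ d) n \<noteq> 0"
proof -
  have "1 - qvar ^ e * (qvar ^ d) ^ j \<noteq> 0" for j
    using one_minus_qvar_power_neq_0[of "e + d * j"] assms
    by (simp add: power_add power_mult)
  then show ?thesis
    unfolding qpoch_def by simp
qed

lemma qpoch_qvar_neq_0: "qpoch qvar qvar n \<noteq> 0"
  using qpoch_qvar_power_neq_0[of 1 1 n] by simp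

lemma qpoch_qvar_add:
  "qpoch qvar qvar (s + d) = qpoch qvar qvar s * (\<Prod>u<d. 1 - qvar ^ (s + 1 + u))"
proof (induction d)
  case (Suc d)
  have "qpoch qvar qvar (s + Suc d) = qpoch qvar qvar (s + d) * (1 - qvar ^ (s + 1 + d))"
    using qpoch_Suc[of qvar qvar "s + d"] by simp
  with Suc show ?case
    by (simp add: ac_simps)
qed simp

section \<open>Expansion of the entries in reciprocal q-factorials\<close>

definition qfact_inv :: "int \<Rightarrow> ratfun" where
  "qfact_inv n = (if n < 0 then 0 else 1 / qpoch qvar qvar (nat n))"

definition entry_kernel :: "nat \<Rightarrow> nat \<Rightarrow> ratfun" where
  "entry_kernel N e = qpoch (qvar ^ e) (qvar ^ 2) N / (qpoch (qvar ^ e) qvar N * qpoch qvar qvar N)"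

definition expansion_coeff :: "nat \<Rightarrow> nat \<Rightarrow> ratfun" where
  "expansion_coeff r e =
     qvar ^ (r * (2 * r - 1) + e * r) / (qpoch (qvar ^ 2) (qvar ^ 2) r * qpoch (qvar ^ (e + 1)) (qvar ^ 2) r)"

lemma qfact_inv_neg: "n < 0 \<Longrightarrow> qfact_inv n = 0"
  by (simp add: qfact_inv_def)

lemma qfact_inv_pred: "(1 - qvar ^ m) * qfact_inv (int m) = qfact_inv (int m - 1)"
proof (cases m)
  case (Suc k)
  have "qpoch qvar qvar m = qpoch qvar qvar k * (1 - qvar ^ m)"
    using Suc qpoch_Suc[of qvar qvar k] by simp
  moreover have "1 - qvar ^ m \<noteq> 0"
    using Suc by (intro one_minus_qvar_power_neq_0) simp
  moreover have "qfact_inv (int m - 1) = 1 / qpoch qvar qvar k"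
    using Suc by (simp add: qfact_inv_def)
  moreover have "qfact_inv (int m) = 1 / qpoch qvar qvar m"
    by (simp add: qfact_inv_def)
  ultimately show ?thesis
    using qpoch_qvar_neq_0[of k] by (simp only:) (simp add: field_simps del: power_Suc)
qed (simp add: qfact_inv_def)

lemma entry_kernel_0: "entry_kernel 0 e = 1"
  by (simp add: entry_kernel_def)

lemma qpoch_qvar_power_Suc_shift:
  "qpoch (qvar ^ (e + 1)) qvar N * (1 - qvar ^ (e + Suc N)) = (1 - qvar ^ (e + 1)) * qpoch (qvar ^ (e + 2)) qvar N"
proof -
  have "qvar ^ (e + 1) * qvar ^ N = qvar ^ (e + Suc N)"
    by (simp add: power_add[symmetric])
  then have "qpoch (qvar ^ (e + 1)) qvar (Suc N) = qpoch (qvar ^ (e + 1)) qvar N * (1 - qvar ^ (e + Suc N))"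
    using qpoch_Suc[of "qvar ^ (e + 1)" qvar N] by simp
  moreover have "qpoch (qvar ^ (e + 1)) qvar (Suc N) = (1 - qvar ^ (e + 1)) * qpoch (qvar ^ (e + 2)) qvar N"
    using qpoch_Suc_shift[of "qvar ^ (e + 1)" qvar N]
    by (simp only: power_add power_one_right mult.assoc power2_eq_square)
  ultimately show ?thesis
    by simp
qed

lemma entry_kernel_Suc:
  assumes "e > 0"
  shows "entry_kernel (Suc N) e * (1 - qvar ^ Suc N) * (1 - qvar ^ (e + 1))
       = (1 - qvar ^ (e + Suc N)) * entry_kernel N (e + 2)"
proof -
  let ?Q = qvar
  have num: "qpoch (?Q ^ e) (?Q ^ 2) (Suc N) = (1 - ?Q ^ e) * qpoch (?Q ^ (e + 2)) (?Q ^ 2) N"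
    using qpoch_Suc_shift[of "?Q ^ e" "?Q ^ 2" N] by (simp only: power_add)
  have den1: "qpoch (?Q ^ e) ?Q (Suc N) = (1 - ?Q ^ e) * qpoch (?Q ^ (e + 1)) ?Q N"
    using qpoch_Suc_shift[of "?Q ^ e" ?Q N] by (simp only: power_add power_one_right)
  have den2: "qpoch ?Q ?Q (Suc N) = qpoch ?Q ?Q N * (1 - ?Q ^ Suc N)"
    by (simp add: qpoch_Suc)
  have nonzero: "1 - ?Q ^ e \<noteq> 0" "qpoch (?Q ^ (e + 2)) ?Q N \<noteq> 0" "qpoch ?Q ?Q N \<noteq> 0"
    "1 - ?Q ^ Suc N \<noteq> 0" "1 - ?Q ^ (e + 1) \<noteq> 0" "1 - ?Q ^ (e + Suc N) \<noteq> 0"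
    using assms qpoch_qvar_power_neq_0[of "e + 2" 1 N] qpoch_qvar_neq_0[of N]
      one_minus_qvar_power_neq_0[of e] one_minus_qvar_power_neq_0[of "Suc N"]
      one_minus_qvar_power_neq_0[of "e + 1"] one_minus_qvar_power_neq_0[of "e + Suc N"]
    by (simp_all del: power_Suc)
  have "entry_kernel (Suc N) e = (1 - ?Q ^ e) * qpoch (?Q ^ (e + 2)) (?Q ^ 2) N /
      ((1 - ?Q ^ e) * qpoch (?Q ^ (e + 1)) ?Q N * (qpoch ?Q ?Q N * (1 - ?Q ^ Suc N)))"
    unfolding entry_kernel_def num den1 den2 by (simp add: mult.assoc)
  also have "\<dots> = qpoch (?Q ^ (e + 2)) (?Q ^ 2) N
      / (qpoch (?Q ^ (e + 1)) ?Q N * (qpoch ?Q ?Q N * (1 - ?Q ^ Suc N)))"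
    using nonzero(1) by simp
  finally have kernel: "entry_kernel (Suc N) e = qpoch (?Q ^ (e + 2)) (?Q ^ 2) N
      / (qpoch (?Q ^ (e + 1)) ?Q N * (qpoch ?Q ?Q N * (1 - ?Q ^ Suc N)))" .
  have den3': "qpoch (?Q ^ (e + 1)) ?Q N
      = (1 - ?Q ^ (e + 1)) * qpoch (?Q ^ (e + 2)) ?Q N / (1 - ?Q ^ (e + Suc N))"
    using qpoch_qvar_power_Suc_shift[of e N] nonzero(6) by (simp add: field_simps)
  have cancel: "\<And>a d c U V W :: ratfun. d \<noteq> 0 \<Longrightarrow> c \<noteq> 0 \<Longrightarrow> U \<noteq> 0 \<Longrightarrow> V \<noteq> 0 \<Longrightarrow> W \<noteq> 0
      \<Longrightarrow> a / (V * d / W * (c * U)) * U * V = W * (a / (d * c))"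
    by (simp add: field_simps)
  have "entry_kernel N (e + 2) = qpoch (?Q ^ (e + 2)) (?Q ^ 2) N / (qpoch (?Q ^ (e + 2)) ?Q N * qpoch ?Q ?Q N)"
    by (simp only: entry_kernel_def)
  then show ?thesis
    unfolding kernel by (simp only:) (subst den3', rule cancel[OF nonzero(2-6)])
qed

lemma expansion_coeff_0: "expansion_coeff 0 e = 1"
  by (simp add: expansion_coeff_def)

lemma expansion_coeff_shift:
  "expansion_coeff r (e + 2) * (1 - qvar ^ (e + 2 * r + 1))
     = qvar ^ (2 * r) * (1 - qvar ^ (e + 1)) * expansion_coeff r e"
proof -
  let ?Q = qvar
  have "?Q ^ (e + 1) * (?Q ^ 2) ^ r = ?Q ^ (e + 2 * r + 1)"
    by (simp add: power_add[symmetric] power_mult[symmetric] ac_simps)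
  then have "qpoch (?Q ^ (e + 1)) (?Q ^ 2) (Suc r) = qpoch (?Q ^ (e + 1)) (?Q ^ 2) r * (1 - ?Q ^ (e + 2 * r + 1))"
    using qpoch_Suc[of "?Q ^ (e + 1)" "?Q ^ 2" r] by simp
  moreover have "?Q ^ (e + 1) * ?Q ^ 2 = ?Q ^ (e + 3)"
    by (simp add: power_add eval_nat_numeral)
  then have "qpoch (?Q ^ (e + 1)) (?Q ^ 2) (Suc r) = (1 - ?Q ^ (e + 1)) * qpoch (?Q ^ (e + 3)) (?Q ^ 2) r"
    using qpoch_Suc_shift[of "?Q ^ (e + 1)" "?Q ^ 2" r] by simp
  ultimately have den: "qpoch (?Q ^ (e + 1)) (?Q ^ 2) r * (1 - ?Q ^ (e + 2 * r + 1))
      = (1 - ?Q ^ (e + 1)) * qpoch (?Q ^ (e + 3)) (?Q ^ 2) r"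
    by simp
  have "r * (2 * r - 1) + (e + 2) * r = 2 * r + (r * (2 * r - 1) + e * r)"
    by (simp add: algebra_simps)
  then have exponent: "?Q ^ (r * (2 * r - 1) + (e + 2) * r) = ?Q ^ (2 * r) * ?Q ^ (r * (2 * r - 1) + e * r)"
    by (simp only: power_add)
  have "e + 2 + 1 = e + 3"
    by simp
  then have coeff: "expansion_coeff r (e + 2)
      = ?Q ^ (r * (2 * r - 1) + (e + 2) * r) / (qpoch (?Q ^ 2) (?Q ^ 2) r * qpoch (?Q ^ (e + 3)) (?Q ^ 2) r)"
    unfolding expansion_coeff_def by (simp only:)
  have cancel: "\<And>P A B C D W V :: ratfun. A \<noteq> 0 \<Longrightarrow> B \<noteq> 0 \<Longrightarrow> C \<noteq> 0 \<Longrightarrow> B * W = V * C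
      \<Longrightarrow> P * D / (A * C) * W = P * V * (D / (A * B))"
    by (simp add: field_simps)
  show ?thesis
    unfolding coeff exponent unfolding expansion_coeff_def
    by (rule cancel[OF _ _ _ den]) (rule qpoch_qvar_power_neq_0, simp)+
qed

lemma expansion_coeff_Suc:
  "expansion_coeff (Suc r) e * (1 - qvar ^ (2 * r + 2)) * (1 - qvar ^ (e + 2 * r + 1))
     = qvar ^ (4 * r + 1 + e) * expansion_coeff r e"
proof -
  let ?Q = qvar
  have "?Q ^ 2 * (?Q ^ 2) ^ r = ?Q ^ (2 * r + 2)"
    by (simp add: power_add[symmetric] power_mult[symmetric] ac_simps)
  then have den1: "qpoch (?Q ^ 2) (?Q ^ 2) (Suc r) = qpoch (?Q ^ 2) (?Q ^ 2) r * (1 - ?Q ^ (2 * r + 2))"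
    using qpoch_Suc[of "?Q ^ 2" "?Q ^ 2" r] by simp
  have "?Q ^ (e + 1) * (?Q ^ 2) ^ r = ?Q ^ (e + 2 * r + 1)"
    by (simp add: power_add[symmetric] power_mult[symmetric] ac_simps)
  then have den2: "qpoch (?Q ^ (e + 1)) (?Q ^ 2) (Suc r)
      = qpoch (?Q ^ (e + 1)) (?Q ^ 2) r * (1 - ?Q ^ (e + 2 * r + 1))"
    using qpoch_Suc[of "?Q ^ (e + 1)" "?Q ^ 2" r] by simp
  have "Suc r * (2 * Suc r - 1) + e * Suc r = (r * (2 * r - 1) + e * r) + (4 * r + 1 + e)"
    by (cases r) (simp_all add: algebra_simps)
  then have exponent: "?Q ^ (Suc r * (2 * Suc r - 1) + e * Suc r)
      = ?Q ^ (4 * r + 1 + e) * ?Q ^ (r * (2 * r - 1) + e * r)"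
    by (simp add: power_add)
  have cancel: "\<And>P D A B U V :: ratfun. A \<noteq> 0 \<Longrightarrow> B \<noteq> 0 \<Longrightarrow> U \<noteq> 0 \<Longrightarrow> V \<noteq> 0
      \<Longrightarrow> P * D / (A * U * (B * V)) * U * V = P * (D / (A * B))"
    by (simp add: field_simps)
  show ?thesis
    unfolding expansion_coeff_def[of "Suc r"] exponent den1 den2 unfolding expansion_coeff_def
    by (rule cancel; rule qpoch_qvar_power_neq_0 one_minus_qvar_power_neq_0; simp)
qed

lemma combine_shift_recurrences:
  fixes b w u v q c0 c1 c2 E :: "'a :: field"
  assumes "1 - b \<noteq> 0" and "c2 * (1 - b) = q * (1 - u) * c0" and "c1 * (1 - v) * (1 - b) = q * b * c0"
  shows "(1 - b * w) * (c2 * E) = (1 - u) * q * c0 * E + (1 - u) * (1 - v) * c1 * ((1 - w) * E)"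
proof -
  have "(1 - b) * ((1 - b * w) * (c2 * E)) = (1 - b * w) * E * (c2 * (1 - b))"
    by (simp add: algebra_simps)
  also have "\<dots> = (1 - b) * ((1 - u) * q * c0 * E) + (1 - u) * (1 - w) * E * (q * b * c0)"
    unfolding assms(2) by (simp add: algebra_simps)
  also have "\<dots> = (1 - b) * ((1 - u) * q * c0 * E + (1 - u) * (1 - v) * c1 * ((1 - w) * E))"
    unfolding assms(3)[symmetric] by (simp add: algebra_simps)
  finally show ?thesis
    using assms(1) by simp
qed

text \<open>
  Multiplied by the factors of \<open>entry_kernel_Suc\<close>, the \<open>r\<close>-th terms of the expansions of
  \<open>\<phi>(N + 1, e)\<close> and of \<open>\<phi>(N, e + 2)\<close> split into pieces that agree after the shift
  \<open>r \<mapsto> r + 1\<close>, which drives the induction on \<open>N\<close>.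
\<close>

lemma expansion_term_Suc:
  "(1 - qvar ^ Suc N) * (1 - qvar ^ (e + 1)) * (expansion_coeff r e * qfact_inv (int (Suc N) - 2 * int r))
   = (1 - qvar ^ (e + 1)) * qvar ^ (2 * r) * expansion_coeff r e * qfact_inv (int N - 2 * int r)
   + (1 - qvar ^ (e + 1)) * (1 - qvar ^ (2 * r)) * expansion_coeff r e * qfact_inv (int (Suc N) - 2 * int r)"
proof (cases "2 * r \<le> Suc N")
  case True
  then obtain M where M: "Suc N = 2 * r + M"
    by (metis le_add_diff_inverse)
  then have "int N - 2 * int r = int M - 1"
    by simp
  then have low: "qfact_inv (int N - 2 * int r) = (1 - qvar ^ M) * qfact_inv (int M)"
    by (simp add: qfact_inv_pred)
  have high: "int (Suc N) - 2 * int r = int M"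
    using M by simp
  have power: "qvar ^ Suc N = qvar ^ (2 * r) * qvar ^ M"
    unfolding M by (rule power_add)
  show ?thesis
    unfolding low high power by (simp add: algebra_simps)
qed (simp add: qfact_inv_neg)

lemma expansion_term_shift:
  "(1 - qvar ^ (e + Suc N)) * (expansion_coeff r (e + 2) * qfact_inv (int N - 2 * int r))
   = (1 - qvar ^ (e + 1)) * qvar ^ (2 * r) * expansion_coeff r e * qfact_inv (int N - 2 * int r)
   + (1 - qvar ^ (e + 1)) * (1 - qvar ^ (2 * Suc r)) * expansion_coeff (Suc r) e
       * qfact_inv (int (Suc N) - 2 * int (Suc r))"
proof (cases "2 * r \<le> N")
  case True
  then obtain M where M: "N = 2 * r + M"
    by (metis le_add_diff_inverse)
  define E where "E = qfact_inv (int M)"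
  have nonzero: "1 - qvar ^ (e + 2 * r + 1) \<noteq> 0"
    by (rule one_minus_qvar_power_neq_0) simp
  have "qvar ^ (4 * r + 1 + e) = qvar ^ (2 * r) * qvar ^ (e + 2 * r + 1)"
    by (simp flip: power_add)
  moreover have "2 * Suc r = 2 * r + 2"
    by simp
  ultimately have step: "expansion_coeff (Suc r) e * (1 - qvar ^ (2 * Suc r)) * (1 - qvar ^ (e + 2 * r + 1))
      = qvar ^ (2 * r) * qvar ^ (e + 2 * r + 1) * expansion_coeff r e"
    using expansion_coeff_Suc[of r e] by simp
  have "int (Suc N) - 2 * int (Suc r) = int M - 1"
    using M by simp
  then have high: "qfact_inv (int (Suc N) - 2 * int (Suc r)) = (1 - qvar ^ M) * E"
    unfolding E_def by (simp add: qfact_inv_pred)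
  have low: "qfact_inv (int N - 2 * int r) = E"
    unfolding E_def using M by simp
  have "e + Suc N = (e + 2 * r + 1) + M"
    using M by simp
  then have power: "qvar ^ (e + Suc N) = qvar ^ (e + 2 * r + 1) * qvar ^ M"
    by (simp only: power_add)
  show ?thesis
    unfolding high low power by (rule combine_shift_recurrences[OF nonzero expansion_coeff_shift step])
qed (simp add: qfact_inv_neg)

lemma entry_kernel_expansion:
  "e > 0 \<Longrightarrow> entry_kernel N e = (\<Sum>r=0..N. expansion_coeff r e * qfact_inv (int N - 2 * int r))"
proof (induction N arbitrary: e)
  case 0
  then show ?case
    by (simp add: entry_kernel_0 expansion_coeff_0 qfact_inv_def)
next
  case (Suc N)
  define X where "X r = (1 - qvar ^ (e + 1)) * qvar ^ (2 * r) * expansion_coeff r e * qfact_inv (int N - 2 * int r)" for r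
  define Y where "Y r = (1 - qvar ^ (e + 1)) * (1 - qvar ^ (2 * r)) * expansion_coeff r e
                        * qfact_inv (int (Suc N) - 2 * int r)" for r
  define K where "K = (1 - qvar ^ Suc N) * (1 - qvar ^ (e + 1))"
  have IH: "entry_kernel N (e + 2) = (\<Sum>r=0..N. expansion_coeff r (e + 2) * qfact_inv (int N - 2 * int r))"
    using Suc.IH by simp
  have "K \<noteq> 0"
    unfolding K_def using one_minus_qvar_power_neq_0[of "Suc N"] one_minus_qvar_power_neq_0[of "e + 1"] by simp
  have "K * (\<Sum>r=0..Suc N. expansion_coeff r e * qfact_inv (int (Suc N) - 2 * int r)) = (\<Sum>r=0..Suc N. X r + Y r)"
    unfolding sum_distrib_left K_def X_def Y_def by (intro sum.cong refl expansion_term_Suc)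
  also have "\<dots> = (\<Sum>r=0..N. X r + Y (Suc r))"
    unfolding sum.distrib sum.atLeast0_atMost_Suc[of X N] sum.atLeast0_atMost_Suc_shift[of Y N]
    by (simp add: X_def Y_def qfact_inv_neg sum.distrib)
  also have "\<dots> = (1 - qvar ^ (e + Suc N)) * entry_kernel N (e + 2)"
    unfolding IH sum_distrib_left X_def Y_def
    by (intro sum.cong refl expansion_term_shift[symmetric])
  also have "\<dots> = K * entry_kernel (Suc N) e"
    unfolding K_def using entry_kernel_Suc[OF Suc.prems, of N] by (simp add: ac_simps)
  finally show ?case
    using \<open>K \<noteq> 0\<close> by simp
qed

section \<open>Factorization of the matrix\<close>

definition qfact_inv_matrix :: "int list \<Rightarrow> nat \<Rightarrow> nat \<Rightarrow> ratfun" where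
  "qfact_inv_matrix a n k = qfact_inv (a ! (k - 1) + 1 - 2 * int n)"

definition coeff_matrix :: "nat \<Rightarrow> nat \<Rightarrow> nat \<Rightarrow> ratfun" where
  "coeff_matrix x i n = (if i \<le> n then expansion_coeff (n - i) (2 * x + 2 * i) else 0)"

lemma sum_atLeast0_atMost_eq_if_vanish:
  fixes g :: "nat \<Rightarrow> 'a :: comm_monoid_add"
  assumes "\<And>r. min A B < r \<Longrightarrow> g r = 0"
  shows "sum g {0..A} = sum g {0..B}"
proof -
  have "sum g {0..A} = sum g {0..min A B}"
    by (rule sum.mono_neutral_right) (use assms in auto)
  also have "\<dots> = sum g {0..B}"
    by (rule sum.mono_neutral_left) (use assms in auto)
  finally show ?thesis .
qed

lemma mprime_eq_matmul:
  assumes i: "1 \<le> i" "i \<le> m" and ak: "a ! (k - 1) \<le> 2 * int m"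
  shows "mprime a x i k = matmul m (coeff_matrix x) (qfact_inv_matrix a) i k"
proof -
  define e where "e = 2 * x + 2 * i"
  define K where "K = a ! (k - 1) + 1 - 2 * int i"
  have "e > 0"
    using i unfolding e_def by simp
  have "matmul m (coeff_matrix x) (qfact_inv_matrix a) i k
      = (\<Sum>n=i..m. expansion_coeff (n - i) e * qfact_inv_matrix a n k)"
    unfolding matmul_def
    by (rule sum.mono_neutral_cong_right) (use i in \<open>auto simp: coeff_matrix_def e_def\<close>)
  also have "\<dots> = (\<Sum>n=0+i..(m-i)+i. expansion_coeff (n - i) e * qfact_inv_matrix a n k)"
    using i by simp
  also have "\<dots> = (\<Sum>r=0..m-i. expansion_coeff r e * qfact_inv (K - 2 * int r))"
    unfolding sum.shift_bounds_cl_nat_ivl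
    by (intro sum.cong refl) (simp add: qfact_inv_matrix_def K_def algebra_simps)
  finally have product: "matmul m (coeff_matrix x) (qfact_inv_matrix a) i k
      = (\<Sum>r=0..m-i. expansion_coeff r e * qfact_inv (K - 2 * int r))" .
  show ?thesis
  proof (cases "K \<ge> 0")
    case True
    have "mprime a x i k = entry_kernel (nat K) e"
      using True unfolding mprime_def entry_kernel_def Let_def K_def e_def by simp
    also have "\<dots> = (\<Sum>r=0..nat K. expansion_coeff r e * qfact_inv (K - 2 * int r))"
      using entry_kernel_expansion[OF \<open>e > 0\<close>, of "nat K"] True by simp
    also have "\<dots> = (\<Sum>r=0..m-i. expansion_coeff r e * qfact_inv (K - 2 * int r))"
      by (rule sum_atLeast0_atMost_eq_if_vanish)
         (use True ak i in \<open>auto simp: qfact_inv_neg K_def\<close>)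
    finally show ?thesis
      using product by simp
  next
    case False
    then show ?thesis
      unfolding product using False
      by (auto simp: mprime_def Let_def K_def qfact_inv_neg intro!: sum.neutral)
  qed
qed

lemma matmul_assoc: "matmul m (matmul m A B) C i j = matmul m A (matmul m B C) i j"
  unfolding matmul_def sum_distrib_left sum_distrib_right
  by (subst sum.swap) (simp add: mult.assoc)

lemma matmul_upper_triangular:
  assumes U: "\<And>i n. i \<in> {1..m} \<Longrightarrow> n \<in> {1..m} \<Longrightarrow> n < i \<Longrightarrow> U i n = 0"
    and V: "\<And>n j. n \<in> {1..m} \<Longrightarrow> j \<in> {1..m} \<Longrightarrow> j < n \<Longrightarrow> V n j = 0"
    and ij: "i \<in> {1..m}" "j \<in> {1..m}" "j \<le> i"
  shows "matmul m U V i j = (if i = j then U i i * V i i else 0)"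
proof -
  have "matmul m U V i j = (\<Sum>n\<in>{1..m}. if n = i \<and> i = j then U i i * V i i else 0)"
    unfolding matmul_def
  proof (intro sum.cong refl)
    fix n assume "n \<in> {1..m}"
    then show "U i n * V n j = (if n = i \<and> i = j then U i i * V i i else 0)"
      using U[of i n] V[of n j] ij by (cases "n < i") auto
  qed
  then show ?thesis
    using ij by (simp add: sum.delta')
qed

section \<open>Invertibility of the trailing blocks\<close>

lemma permutes_lessThan_Suc_fix_last:
  assumes p: "p permutes {..<Suc L}" and "p L = L"
  shows "p permutes {..<L}"
  unfolding permutes_def
proof (intro conjI allI impI)
  fix x assume "x \<notin> {..<L}"
  then show "p x = x"
    using \<open>p L = L\<close> permutes_not_in[OF p, of x] by (cases "x = L") auto
next
  fix y show "\<exists>!x. p x = y"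
    using p unfolding permutes_def by blast
qed

lemma rearrangement_two:
  fixes i j a b :: nat
  assumes "i < j" and "a < b"
  shows "i * b + j * a < i * a + j * b"
proof -
  obtain \<delta> where \<delta>: "b = a + \<delta>" "\<delta> > 0"
    using \<open>a < b\<close> by (metis less_imp_add_positive)
  obtain \<epsilon> where \<epsilon>: "j = i + \<epsilon>" "\<epsilon> > 0"
    using \<open>i < j\<close> by (metis less_imp_add_positive)
  show ?thesis
    unfolding \<delta>(1) \<epsilon>(1) using \<delta>(2) \<epsilon>(2) by (simp add: algebra_simps)
qed

lemma rearrangement_swap_last:
  fixes c :: "nat \<Rightarrow> nat"
  assumes c_mono: "\<And>x y. x < y \<Longrightarrow> y < Suc L \<Longrightarrow> c x < c y"
    and p: "p permutes {..<Suc L}" and "p L \<noteq> L"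
  shows "\<exists>t. t permutes {..<Suc L} \<and> t L = L \<and> (\<Sum>i<Suc L. i * c (p i)) < (\<Sum>i<Suc L. i * c (t i))"
proof -
  obtain i0 where i0: "p i0 = L"
    using p unfolding permutes_def by blast
  have "i0 < L"
    using permutes_in_image[OF p, of i0] i0 \<open>p L \<noteq> L\<close> by (cases "i0 = L") auto
  have "p L < L"
    using permutes_in_image[OF p, of L] \<open>p L \<noteq> L\<close> by simp
  define t where "t = p \<circ> transpose i0 L"
  have t: "t permutes {..<Suc L}"
    unfolding t_def by (rule permutes_compose[OF permutes_swap_id p]) (use \<open>i0 < L\<close> in auto)
  have "t L = L"
    unfolding t_def using i0 by simp
  define R where "R = (\<Sum>i\<in>{..<Suc L} - {i0} - {L}. i * c (p i))"
  have split: "(\<Sum>i<Suc L. i * c (g i))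
      = i0 * c (g i0) + L * c (g L) + (\<Sum>i\<in>{..<Suc L} - {i0} - {L}. i * c (g i))" for g
  proof -
    have "(\<Sum>i<Suc L. i * c (g i)) = i0 * c (g i0) + (\<Sum>i\<in>{..<Suc L} - {i0}. i * c (g i))"
      by (rule sum.remove) (use \<open>i0 < L\<close> in auto)
    also have "(\<Sum>i\<in>{..<Suc L} - {i0}. i * c (g i))
        = L * c (g L) + (\<Sum>i\<in>{..<Suc L} - {i0} - {L}. i * c (g i))"
      by (rule sum.remove) (use \<open>i0 < L\<close> in auto)
    finally show ?thesis
      by (simp only: add.assoc)
  qed
  have "(\<Sum>i\<in>{..<Suc L} - {i0} - {L}. i * c (t i)) = R"
    unfolding R_def t_def by (intro sum.cong refl) simp
  then have St: "(\<Sum>i<Suc L. i * c (t i)) = i0 * c (p L) + L * c L + R"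
    using split[of t] \<open>t L = L\<close> by (simp add: t_def)
  have Sp: "(\<Sum>i<Suc L. i * c (p i)) = i0 * c L + L * c (p L) + R"
    using split[of p] i0 R_def by simp
  have "i0 * c L + L * c (p L) < i0 * c (p L) + L * c L"
    using rearrangement_two[OF \<open>i0 < L\<close> c_mono[OF \<open>p L < L\<close>]] by simp
  then have "(\<Sum>i<Suc L. i * c (p i)) < (\<Sum>i<Suc L. i * c (t i))"
    unfolding Sp St by simp
  with t \<open>t L = L\<close> show ?thesis
    by blast
qed

lemma rearrangement_inequality:
  fixes c :: "nat \<Rightarrow> nat"
  assumes "\<And>x y. x < y \<Longrightarrow> y < L \<Longrightarrow> c x < c y" and "p permutes {..<L}"
  shows "(\<Sum>i<L. i * c (p i)) \<le> (\<Sum>i<L. i * c i)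
    \<and> (p \<noteq> id \<longrightarrow> (\<Sum>i<L. i * c (p i)) < (\<Sum>i<L. i * c i))"
  using assms
proof (induction L arbitrary: p)
  case 0
  then have "p = id"
    by (simp add: permutes_def fun_eq_iff)
  then show ?case
    by simp
next
  case (Suc L)
  have fixing_last: "(\<Sum>i<Suc L. i * c (t i)) \<le> (\<Sum>i<Suc L. i * c i)
      \<and> (t \<noteq> id \<longrightarrow> (\<Sum>i<Suc L. i * c (t i)) < (\<Sum>i<Suc L. i * c i))"
    if t: "t permutes {..<Suc L}" "t L = L" for t
    using Suc.IH[OF _ permutes_lessThan_Suc_fix_last[OF t]] Suc.prems(1) t(2) by (auto simp: id_def)
  show ?case
  proof (cases "p L = L")
    case True
    then show ?thesis
      using fixing_last[OF Suc.prems(2)] by blast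
  next
    case False
    then obtain t where "t permutes {..<Suc L}" "t L = L"
      and "(\<Sum>i<Suc L. i * c (p i)) < (\<Sum>i<Suc L. i * c (t i))"
      using rearrangement_swap_last[of L c p, OF Suc.prems(1) Suc.prems(2) False] by blast
    with fixing_last[of t] show ?thesis
      by simp
  qed
qed

text \<open>
  \<open>qfact_tail n c\<close> is the polynomial \<open>(q;q)\<^sub>c / (q;q)\<^sub>c\<^sub>-\<^sub>2\<^sub>n\<close>, so that
  \<open>1 / (q;q)\<^sub>c\<^sub>-\<^sub>2\<^sub>n = qfact_tail n c / (q;q)\<^sub>c\<close> for every \<open>c\<close>, both sides vanishing when \<open>c < 2n\<close>.
\<close>

definition qfact_tail :: "nat \<Rightarrow> nat \<Rightarrow> complex poly" where
  "qfact_tail n c = (if 2 * n \<le> c then (\<Prod>u<2 * n. 1 - monom 1 (c - 2 * n + 1 + u)) else 0)"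

lemma degree_one_minus_monom:
  assumes "t \<ge> 1"
  shows "degree (1 - monom (1::complex) t) = t"
proof -
  have "degree (- monom (1::complex) t + 1) = degree (- monom (1::complex) t)"
    by (rule degree_add_eq_left) (use assms in \<open>simp add: degree_monom_eq\<close>)
  then show ?thesis
    by (simp add: degree_monom_eq)
qed

lemma qfact_tail_neq_0_iff: "qfact_tail n c \<noteq> 0 \<longleftrightarrow> 2 * n \<le> c"
  by (auto simp: qfact_tail_def monom_eq_1_iff)

lemma degree_qfact_tail:
  assumes "2 * n \<le> c"
  shows "degree (qfact_tail n c) + 2 * n * n = 2 * n * c + n"
proof -
  obtain r where r: "c = 2 * n + r"
    using assms by (metis le_add_diff_inverse)
  have "degree (qfact_tail n c) = (\<Sum>u<2 * n. degree (1 - monom (1::complex) (r + 1 + u)))"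
    unfolding qfact_tail_def r by (simp add: degree_prod_eq_sum_degree monom_eq_1_iff)
  also have "\<dots> = (\<Sum>u<2 * n. r + 1 + u)"
    by (simp add: degree_one_minus_monom)
  finally have degree: "degree (qfact_tail n c) = (\<Sum>u<2 * n. r + 1 + u)" .
  have "(\<Sum>u<d. r + 1 + u) * 2 + d = d * (2 * r + 2 + d)" for d
    by (induction d) (simp_all add: algebra_simps)
  from this[of "2 * n"] have "2 * (degree (qfact_tail n c) + 2 * n * n) = 2 * (2 * n * c + n)"
    unfolding degree by (simp add: r algebra_simps)
  then show ?thesis
    by (simp only: mult_cancel_left) simp
qed

lemma qfact_inv_eq_qfact_tail: "qfact_inv (int c - 2 * int n) = to_fract (qfact_tail n c) / qpoch qvar qvar c"
proof (cases "2 * n \<le> c")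
  case True
  define tail where "tail = (\<Prod>u<2 * n. 1 - qvar ^ (c - 2 * n + 1 + u))"
  have to_fract_tail: "to_fract (qfact_tail n c) = tail"
    unfolding tail_def using True by (simp add: qfact_tail_def to_fract_hom.hom_prod to_fract_monom_1)
  have split: "qpoch qvar qvar c = qpoch qvar qvar (c - 2 * n) * tail"
    unfolding tail_def using qpoch_qvar_add[of "c - 2 * n" "2 * n"] True by simp
  have "tail \<noteq> 0"
    using qpoch_qvar_neq_0[of c] unfolding split by auto
  have "int c - 2 * int n = int (c - 2 * n)"
    using True by simp
  then have "qfact_inv (int c - 2 * int n) = 1 / qpoch qvar qvar (c - 2 * n)"
    unfolding qfact_inv_def by (simp only: nat_int of_nat_less_0_iff if_False)
  also have "\<dots> = to_fract (qfact_tail n c) / qpoch qvar qvar c"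
    unfolding to_fract_tail split using \<open>tail \<noteq> 0\<close> by (rule nonzero_divide_mult_cancel_right[symmetric])
  finally show ?thesis .
qed (simp add: qfact_inv_def qfact_tail_def)

lemma degree_qfact_tail_prod:
  fixes d :: "nat \<Rightarrow> nat"
  assumes "\<And>i. i < L \<Longrightarrow> 2 * (s + i) \<le> d i"
  shows "degree (\<Prod>i<L. qfact_tail (s + i) (d i)) + (\<Sum>i<L. 2 * (s + i) * (s + i))
    = 2 * s * (\<Sum>i<L. d i) + 2 * (\<Sum>i<L. i * d i) + (\<Sum>i<L. s + i)"
proof -
  have "degree (\<Prod>i<L. qfact_tail (s + i) (d i)) = (\<Sum>i<L. degree (qfact_tail (s + i) (d i)))"
    by (rule degree_prod_eq_sum_degree) (use assms in \<open>auto simp: qfact_tail_neq_0_iff\<close>)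
  moreover have "(\<Sum>i<L. degree (qfact_tail (s + i) (d i))) + (\<Sum>i<L. 2 * (s + i) * (s + i))
      = (\<Sum>i<L. 2 * (s + i) * d i + (s + i))"
    unfolding sum.distrib[symmetric] by (intro sum.cong refl degree_qfact_tail assms) simp
  moreover have "(\<Sum>i<L. 2 * (s + i) * d i + (s + i))
      = 2 * s * (\<Sum>i<L. d i) + 2 * (\<Sum>i<L. i * d i) + (\<Sum>i<L. s + i)"
    by (simp add: sum.distrib sum_distrib_left algebra_simps)
  ultimately show ?thesis
    by simp
qed

lemma degree_qfact_tail_permuted_less:
  fixes c :: "nat \<Rightarrow> nat"
  assumes c_mono: "\<And>x y. x < y \<Longrightarrow> y < L \<Longrightarrow> c x < c y"
    and c_bound: "\<And>i. i < L \<Longrightarrow> 2 * (s + i) \<le> c i"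
    and p: "p permutes {..<L}" "p \<noteq> id"
    and nonzero: "\<And>i. i < L \<Longrightarrow> qfact_tail (s + i) (c (p i)) \<noteq> 0"
  shows "degree (\<Prod>i<L. qfact_tail (s + i) (c (p i))) < degree (\<Prod>i<L. qfact_tail (s + i) (c i))"
proof -
  have "2 * (s + i) \<le> c (p i)" if "i < L" for i
    using nonzero[OF that] by (simp add: qfact_tail_neq_0_iff)
  then have degree_p: "degree (\<Prod>i<L. qfact_tail (s + i) (c (p i))) + (\<Sum>i<L. 2 * (s + i) * (s + i))
      = 2 * s * (\<Sum>i<L. c (p i)) + 2 * (\<Sum>i<L. i * c (p i)) + (\<Sum>i<L. s + i)"
    by (rule degree_qfact_tail_prod)
  have permuted_sum: "(\<Sum>i<L. c (p i)) = (\<Sum>i<L. c i)"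
    using sum.permute[OF p(1), of c] by (simp add: comp_def)
  have less: "(\<Sum>i<L. i * c (p i)) < (\<Sum>i<L. i * c i)"
    by (rule mp[OF conjunct2[OF rearrangement_inequality[OF c_mono p(1)]] p(2)])
  have arith: "\<And>A B S C X Y K :: nat. A + S = C + 2 * X + K \<Longrightarrow> B + S = C + 2 * Y + K \<Longrightarrow> X < Y \<Longrightarrow> A < B"
    by linarith
  show ?thesis
    by (rule arith[OF degree_p[unfolded permuted_sum] degree_qfact_tail_prod[OF c_bound] less])
qed

lemma det_mat_leibniz:
  "det (mat n n (\<lambda>(i, l). g i l)) = (\<Sum>p | p permutes {..<n}. signof p * (\<Prod>i<n. g i (p i)))"
proof -
  have "mat n n (\<lambda>(i, l). g i l) \<in> carrier_mat n n"
    by simp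
  then show ?thesis
    unfolding det_def'[OF \<open>mat n n (\<lambda>(i, l). g i l) \<in> carrier_mat n n\<close>] atLeast0LessThan
  proof (intro sum.cong refl arg_cong2[where f = "(*)"] prod.cong)
    fix p i assume "p \<in> {p. p permutes {..<n}}" and "i \<in> {..<n}"
    then show "mat n n (\<lambda>(i, l). g i l) $$ (i, p i) = g i (p i)"
      using permutes_in_image[of p "{..<n}" i] by simp
  qed
qed

lemma det_qfact_tail_matrix_neq_0:
  fixes c :: "nat \<Rightarrow> nat"
  assumes c_mono: "\<And>x y. x < y \<Longrightarrow> y < L \<Longrightarrow> c x < c y"
    and c_bound: "\<And>i. i < L \<Longrightarrow> 2 * (s + i) \<le> c i"
  shows "det (mat L L (\<lambda>(i, l). qfact_tail (s + i) (c l))) \<noteq> 0"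
proof -
  define P where "P = {p. p permutes {..<L}}"
  define T where "T p = signof p * (\<Prod>i<L. qfact_tail (s + i) (c (p i)))" for p
  define D where "D = degree (\<Prod>i<L. qfact_tail (s + i) (c i))"
  have det: "det (mat L L (\<lambda>(i, l). qfact_tail (s + i) (c l))) = (\<Sum>p\<in>P. T p)"
    unfolding det_mat_leibniz P_def T_def ..
  have lead: "coeff (T id) D = lead_coeff (T id)" and "T id \<noteq> 0"
    using c_bound by (simp_all add: T_def D_def qfact_tail_neq_0_iff)
  have "coeff (T p) D = 0" if "p \<in> P - {id}" for p
  proof (cases "\<forall>i<L. qfact_tail (s + i) (c (p i)) \<noteq> 0")
    case True
    then have nonzero: "\<And>i. i < L \<Longrightarrow> qfact_tail (s + i) (c (p i)) \<noteq> 0"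
      by blast
    have p: "p permutes {..<L}" "p \<noteq> id"
      using that unfolding P_def by simp_all
    have "degree (T p) = degree (\<Prod>i<L. qfact_tail (s + i) (c (p i)))"
      unfolding T_def by (cases p rule: sign_cases) simp_all
    also have "\<dots> < D"
      unfolding D_def by (rule degree_qfact_tail_permuted_less[OF c_mono c_bound p nonzero])
    finally show ?thesis
      by (rule coeff_eq_0)
  next
    case False
    then have "T p = 0"
      unfolding T_def by auto
    then show ?thesis
      by simp
  qed
  then have "(\<Sum>p\<in>P - {id}. coeff (T p) D) = 0"
    by (rule sum.neutral[rule_format])
  moreover have "coeff (\<Sum>p\<in>P. T p) D = coeff (T id) D + (\<Sum>p\<in>P - {id}. coeff (T p) D)"
    unfolding coeff_sum P_def by (rule sum.remove) (simp_all add: finite_permutations)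
  ultimately have "coeff (\<Sum>p\<in>P. T p) D = lead_coeff (T id)"
    using lead by simp
  with \<open>T id \<noteq> 0\<close> show ?thesis
    unfolding det by auto
qed

lemma det_neq_0_imp_solvable:
  fixes A :: "'a :: field mat"
  assumes A: "A \<in> carrier_mat n n" and "det A \<noteq> 0" and w: "w \<in> carrier_vec n"
  shows "\<exists>y \<in> carrier_vec n. A *\<^sub>v y = w"
proof -
  obtain B where B: "B \<in> carrier_mat n n" and AB: "A * B = 1\<^sub>m n"
    using det_non_zero_imp_unit[OF A \<open>det A \<noteq> 0\<close>, of "()"] unfolding Units_def ring_mat_def by auto
  have "A *\<^sub>v (B *\<^sub>v w) = (A * B) *\<^sub>v w"
    using A B w by (simp add: assoc_mult_mat_vec)
  then show ?thesis
    using B w AB by (intro bexI[of _ "B *\<^sub>v w"]) auto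
qed

lemma qfact_tail_system_solvable:
  fixes c :: "nat \<Rightarrow> nat" and w :: "nat \<Rightarrow> ratfun"
  assumes c_mono: "\<And>x y. x < y \<Longrightarrow> y < L \<Longrightarrow> c x < c y"
    and c_bound: "\<And>i. i < L \<Longrightarrow> 2 * (s + i) \<le> c i"
  shows "\<exists>y. \<forall>i<L. (\<Sum>l=0..<L. to_fract (qfact_tail (s + i) (c l)) * y l) = w i"
proof -
  define A where "A = map_mat to_fract (mat L L (\<lambda>(i, l). qfact_tail (s + i) (c l)))"
  have "det A \<noteq> 0"
    unfolding A_def using det_qfact_tail_matrix_neq_0[of L c s] c_mono c_bound by simp
  then obtain y where y: "y \<in> carrier_vec L" and solution: "A *\<^sub>v y = vec L w"
    using det_neq_0_imp_solvable[of A L "vec L w"] unfolding A_def by auto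
  show ?thesis
  proof (intro exI[of _ "\<lambda>l. y $ l"] allI impI)
    fix i assume "i < L"
    have "(\<Sum>l=0..<L. to_fract (qfact_tail (s + i) (c l)) * y $ l) = (A *\<^sub>v y) $ i"
      using \<open>i < L\<close> y unfolding A_def by (simp add: scalar_prod_def)
    also have "\<dots> = w i"
      unfolding solution using \<open>i < L\<close> by simp
    finally show "(\<Sum>l=0..<L. to_fract (qfact_tail (s + i) (c l)) * y $ l) = w i" .
  qed
qed

section \<open>Column elimination\<close>

lemma admissible_nth_lower:
  assumes "admissible a" and "k < length a"
  shows "2 * int k + 1 \<le> a ! k"
  using assms unfolding admissible_def by (auto dest!: bspec[of _ _ "k + 1"])

lemma admissible_nth_strict_mono:
  assumes "admissible a" and "k < l" and "l < length a"
  shows "a ! k < a ! l"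
  using assms unfolding admissible_def by (auto intro: sorted_wrt_nth_less)

lemma qfact_inv_matrix_column_elimination:
  assumes adm: "admissible a" and j: "1 \<le> j" "j \<le> length a"
  shows "\<exists>g. \<forall>n\<in>{j+1..length a}.
           qfact_inv_matrix a n j + (\<Sum>k=j+1..length a. qfact_inv_matrix a n k * g k) = 0"
proof -
  define L where "L = length a - j"
  define c where "c l = nat (a ! (j + l) + 1)" for l
  have lower: "2 * int (j + l) + 1 \<le> a ! (j + l)" if "l < L" for l
    using admissible_nth_lower[OF adm, of "j + l"] that unfolding L_def by simp
  have c_int: "int (c l) = a ! (j + l) + 1" if "l < L" for l
    using lower[OF that] unfolding c_def by simp
  have c_bound: "2 * (j + 1 + l) \<le> c l" if "l < L" for l
    using lower[OF that] c_int[OF that] by simp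
  have c_mono: "c x < c y" if "x < y" "y < L" for x y
  proof -
    have "a ! (j + x) < a ! (j + y)"
      using admissible_nth_strict_mono[OF adm] that unfolding L_def by simp
    then show ?thesis
      using c_int[of x] c_int[of y] that by simp
  qed
  have entry: "qfact_inv_matrix a n (j + 1 + l) = to_fract (qfact_tail n (c l)) / qpoch qvar qvar (c l)"
    if "l < L" for n l
    using qfact_inv_eq_qfact_tail[of "c l" n] c_int[OF that] by (simp add: qfact_inv_matrix_def add.commute)
  obtain y where y: "\<forall>i<L. (\<Sum>l=0..<L. to_fract (qfact_tail (j + 1 + i) (c l)) * y l)
      = - qfact_inv_matrix a (j + 1 + i) j"
    using qfact_tail_system_solvable[of L c "j + 1" "\<lambda>i. - qfact_inv_matrix a (j + 1 + i) j",
        OF c_mono c_bound] by blast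
  define g where "g k = y (k - (j + 1)) * qpoch qvar qvar (c (k - (j + 1)))" for k
  show ?thesis
  proof (intro exI[of _ g] ballI)
    fix n assume n: "n \<in> {j+1..length a}"
    define i where "i = n - (j + 1)"
    have "i < L" and n_eq: "n = j + 1 + i"
      using n unfolding i_def L_def by auto
    have "(\<Sum>k=j+1..length a. qfact_inv_matrix a n k * g k)
        = (\<Sum>k=0+(j+1)..<L+(j+1). qfact_inv_matrix a n k * g k)"
      using j by (intro sum.cong refl) (auto simp: L_def)
    also have "\<dots> = (\<Sum>l=0..<L. qfact_inv_matrix a n (l + (j + 1)) * g (l + (j + 1)))"
      by (rule sum.shift_bounds_nat_ivl)
    also have "\<dots> = (\<Sum>l=0..<L. to_fract (qfact_tail n (c l)) * y l)"
    proof (intro sum.cong refl)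
      fix l assume "l \<in> {0..<L}"
      then have "qfact_inv_matrix a n (l + (j + 1)) = to_fract (qfact_tail n (c l)) / qpoch qvar qvar (c l)"
        using entry[of l n] by (simp add: ac_simps)
      then show "qfact_inv_matrix a n (l + (j + 1)) * g (l + (j + 1)) = to_fract (qfact_tail n (c l)) * y l"
        unfolding g_def using qpoch_qvar_neq_0[of "c l"] by simp
    qed
    also have "\<dots> = - qfact_inv_matrix a n j"
      using y \<open>i < L\<close> unfolding n_eq by blast
    finally show "qfact_inv_matrix a n j + (\<Sum>k=j+1..length a. qfact_inv_matrix a n k * g k) = 0"
      by simp
  qed
qed

lemma qfact_inv_matrix_unitriangular_reduction:
  assumes "admissible a"
  defines "m \<equiv> length a"
  shows "\<exists>f. (\<forall>i\<in>{1..m}. \<forall>j\<in>{1..m}. i < j \<longrightarrow> f i j = 0) \<and> (\<forall>i. f i i = 1) \<and>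
             (\<forall>n\<in>{1..m}. \<forall>j\<in>{1..m}. j < n \<longrightarrow> matmul m (qfact_inv_matrix a) f n j = 0)"
proof -
  have "\<forall>j\<in>{1..m}. \<exists>g. \<forall>n\<in>{j+1..m}.
      qfact_inv_matrix a n j + (\<Sum>k=j+1..m. qfact_inv_matrix a n k * g k) = 0"
    using qfact_inv_matrix_column_elimination[OF assms(1)] unfolding m_def by auto
  then obtain G where G: "\<forall>j\<in>{1..m}. \<forall>n\<in>{j+1..m}.
      qfact_inv_matrix a n j + (\<Sum>k=j+1..m. qfact_inv_matrix a n k * G j k) = 0"
    by (metis (no_types) bchoice)
  define f where "f i j = (if i = j then 1 else if j < i then G j i else 0)" for i j
  have "matmul m (qfact_inv_matrix a) f n j = 0" if jn: "j \<in> {1..m}" "n \<in> {1..m}" "j < n" for n j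
  proof -
    have "matmul m (qfact_inv_matrix a) f n j = (\<Sum>k=j..m. qfact_inv_matrix a n k * f k j)"
      unfolding matmul_def by (rule sum.mono_neutral_cong_right) (use jn in \<open>auto simp: f_def\<close>)
    also have "\<dots> = qfact_inv_matrix a n j + (\<Sum>k=j+1..m. qfact_inv_matrix a n k * G j k)"
      using jn by (subst sum.atLeast_Suc_atMost) (auto simp: f_def)
    finally show ?thesis
      using G jn by auto
  qed
  then show ?thesis
    by (intro exI[of _ f]) (auto simp: f_def)
qed

theorem admissible_mprime_triangularization:
  assumes "admissible a"
  defines "m \<equiv> length a"
  shows "\<exists>f. (\<forall>i\<in>{1..m}. \<forall>j\<in>{1..m}. i < j \<longrightarrow> f i j = 0) \<and> (\<forall>i\<in>{1..m}. f i i = 1) \<and>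
           (\<exists>d. \<forall>x. (\<forall>i\<in>{1..m}. \<forall>j\<in>{1..m}. j < i \<longrightarrow> matmul m (mprime a x) f i j = 0) \<and>
                     (\<forall>i\<in>{1..m}. matmul m (mprime a x) f i i = d i))"
proof -
  obtain f where f_upper: "\<forall>i\<in>{1..m}. \<forall>j\<in>{1..m}. i < j \<longrightarrow> f i j = 0" and f_diag: "\<forall>i. f i i = 1"
    and reduced: "\<forall>n\<in>{1..m}. \<forall>j\<in>{1..m}. j < n \<longrightarrow> matmul m (qfact_inv_matrix a) f n j = 0"
    using qfact_inv_matrix_unitriangular_reduction[OF assms(1)] unfolding m_def by blast
  have upper: "a ! (k - 1) \<le> 2 * int m" if "k \<in> {1..m}" for k
    using assms(1) that unfolding admissible_def m_def by blast
  define V where "V = matmul m (qfact_inv_matrix a) f"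
  have "matmul m (mprime a x) f i j = (if i = j then V i i else 0)"
    if ij: "i \<in> {1..m}" "j \<in> {1..m}" "j \<le> i" for x i j
  proof -
    have "mprime a x i k = matmul m (coeff_matrix x) (qfact_inv_matrix a) i k" if "k \<in> {1..m}" for k
      using ij that upper by (intro mprime_eq_matmul) auto
    then have "matmul m (mprime a x) f i j = matmul m (matmul m (coeff_matrix x) (qfact_inv_matrix a)) f i j"
      unfolding matmul_def[of m "mprime a x"] matmul_def[of m "matmul m (coeff_matrix x) (qfact_inv_matrix a)"]
      by (intro sum.cong refl) simp
    also have "\<dots> = matmul m (coeff_matrix x) V i j"
      unfolding V_def by (rule matmul_assoc)
    also have "\<dots> = (if i = j then V i i else 0)"
      using ij reduced by (subst matmul_upper_triangular)
        (auto simp: V_def coeff_matrix_def expansion_coeff_0)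
    finally show ?thesis .
  qed
  then show ?thesis
    using f_upper f_diag by (intro exI[of _ f] conjI exI[of _ "\<lambda>i. V i i"]) auto
qed

theorem mainTheorem2:
  fixes a :: "int list"
  assumes "irreducible_seq a"
  shows "\<exists>f :: nat \<Rightarrow> nat \<Rightarrow> ratfun.
           (\<forall>i\<in>{1..length a}. \<forall>j\<in>{1..length a}. i < j \<longrightarrow> f i j = 0) \<and>
           (\<forall>i\<in>{1..length a}. f i i = 1) \<and>
           (\<exists>d :: nat \<Rightarrow> ratfun. \<forall>x :: nat.
              (\<forall>i\<in>{1..length a}. \<forall>j\<in>{1..length a}. j < i \<longrightarrow>
                  matmul (length a) (mprime a x) f i j = 0) \<and>
              (\<forall>i\<in>{1..length a}. matmul (length a) (mprime a x) f i i = d i))"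
  using admissible_mprime_triangularization[of a] assms by (simp add: irreducible_seq_def)

end
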